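(* For all positive integers $n$ and all nonnegative integers $d_1 \le d_2$, we have $\mathsf{maxR}(n,d_1) \le \mathsf{maxR}(n,d_2)$.
   Context: $\mathsf{WR}(f)$ is the Waring rank of a homogeneous $f\in\mathbb{C}[x_1,\dots,x_n]_d$: the smallest $r$ with $f=\sum_{k=1}^r\ell_k^d$ for linear forms $\ell_k$. $\mathsf{maxR}(n,d) = \max\{\mathsf{WR}(f) \mid f \in \mathbb{C}[x_1,\dots,x_n]_d\}$ is the maximum Waring rank of a degree-$d$ form in $n$ variables. *)

theory Defs
  imports Complex_Main "HOL-Library.Extended_Nat"
begin

definition monoms :: "nat \<Rightarrow> nat \<Rightarrow> (nat \<Rightarrow> nat) set" where
  "monoms n d = {\<alpha>. (\<forall>i\<ge>n. \<alpha> i = 0) \<and> (\<Sum>i<n. \<alpha> i) = d}"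

(* Homogeneous forms of degree d in n variables over C, represented by their
   polynomial functions (faithful since C is infinite). Points are x :: nat => complex;
   only the coordinates x 0, ..., x (n-1) matter. *)
definition forms :: "nat \<Rightarrow> nat \<Rightarrow> ((nat \<Rightarrow> complex) \<Rightarrow> complex) set" where
  "forms n d = {F. \<exists>c :: (nat \<Rightarrow> nat) \<Rightarrow> complex.
      \<forall>x. F x = (\<Sum>\<alpha>\<in>monoms n d. c \<alpha> * (\<Prod>i<n. x i ^ \<alpha> i))}"

(* Waring rank: least r with F = sum_{k<r} c_k * l_k^d, l_k linear forms.
   (Scalars c_k are absorbed into l_k when d >= 1 over C; they give the
   standard convention in degree 0.)  Infinity if no decomposition. *)
definition WR :: "nat \<Rightarrow> nat \<Rightarrow> ((nat \<Rightarrow> complex) \<Rightarrow> complex) \<Rightarrow> enat" where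
  "WR n d F = (INF r \<in> {r. \<exists>(c :: nat \<Rightarrow> complex) (a :: nat \<Rightarrow> nat \<Rightarrow> complex).
      \<forall>x. F x = (\<Sum>k<r. c k * (\<Sum>i<n. a k i * x i) ^ d)}. enat r)"

definition maxR :: "nat \<Rightarrow> nat \<Rightarrow> enat" where
  "maxR n d = (SUP F \<in> forms n d. WR n d F)"

end

(* Differentiating a Waring decomposition G = sum_k c_k l_k^(d+1) with respect to x_0 gives
   the decomposition dG/dx_0 = sum_k (d+1) c_k l_k(e_0) l_k^d of the same length, so
   WR(dG/dx_0) <= WR(G). Every form F of degree d is dG/dx_0 for some form G of degree d+1
   (integrate each monomial in x_0), hence WR(F) <= maxR(n, d+1); this needs n >= 1. *)
theory Submission imports Defs begin

lemma finite_monoms: "finite (monoms n d)"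
proof (rule finite_subset)
  show "monoms n d \<subseteq>
      {\<alpha>. \<forall>i. (i \<in> {..<n} \<longrightarrow> \<alpha> i \<in> {..d}) \<and> (i \<notin> {..<n} \<longrightarrow> \<alpha> i = 0)}"
    unfolding monoms_def by (auto intro: member_le_sum[of _ "{..<n}", THEN order_trans])
qed (intro finite_set_of_finite_funs; simp)

lemma sum_upd0:
  fixes \<alpha> :: "nat \<Rightarrow> 'a::comm_monoid_add"
  assumes "n \<ge> 1"
  shows "(\<Sum>i<n. (\<alpha>(0 := k)) i) = k + (\<Sum>i\<in>{..<n}-{0}. \<alpha> i)"
  using assms by (simp add: sum.remove[of "{..<n}" 0])

lemma monoms_raise0:
  assumes "n \<ge> 1" and "\<alpha> \<in> monoms n d"
  shows "\<alpha>(0 := Suc (\<alpha> 0)) \<in> monoms n (Suc d)"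
  using assms sum_upd0[OF assms(1), of \<alpha> "\<alpha> 0"] sum_upd0[OF assms(1), of \<alpha> "Suc (\<alpha> 0)"]
  by (auto simp: monoms_def)

lemma prod_monomial_upd0:
  fixes x :: "nat \<Rightarrow> 'a::comm_monoid_mult"
  assumes "n \<ge> 1"
  shows "(\<Prod>i<n. (x(0 := t)) i ^ (\<alpha>(0 := k)) i) = t ^ k * (\<Prod>i\<in>{..<n}-{0}. x i ^ \<alpha> i)"
  using assms by (simp add: prod.remove[of "{..<n}" 0])

lemma sum_monomials_in_forms:
  assumes "inj_on g A" and "g ` A \<subseteq> monoms n d"
  shows "(\<lambda>x. \<Sum>a\<in>A. b a * (\<Prod>i<n. x i ^ g a i)) \<in> forms n d"
proof -
  define c where "c \<beta> = (if \<beta> \<in> g ` A then b (the_inv_into A g \<beta>) else 0)" for \<beta>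
  have "(\<Sum>a\<in>A. b a * (\<Prod>i<n. x i ^ g a i)) = (\<Sum>\<beta>\<in>monoms n d. c \<beta> * (\<Prod>i<n. x i ^ \<beta> i))" for x
  proof -
    have "(\<Sum>a\<in>A. b a * (\<Prod>i<n. x i ^ g a i)) = (\<Sum>\<beta>\<in>g ` A. c \<beta> * (\<Prod>i<n. x i ^ \<beta> i))"
      using assms(1) by (simp add: sum.reindex c_def the_inv_into_f_f)
    also have "\<dots> = (\<Sum>\<beta>\<in>monoms n d. c \<beta> * (\<Prod>i<n. x i ^ \<beta> i))"
      using assms(2) finite_monoms by (intro sum.mono_neutral_left) (auto simp: c_def)
    finally show ?thesis .
  qed
  then show ?thesis
    unfolding forms_def by blast
qed

definition has_partial0_derivative ::
    "((nat \<Rightarrow> complex) \<Rightarrow> complex) \<Rightarrow> ((nat \<Rightarrow> complex) \<Rightarrow> complex) \<Rightarrow> bool" where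
  "has_partial0_derivative G F \<longleftrightarrow> (\<forall>x. ((\<lambda>t. G (x(0 := t))) has_field_derivative F x) (at (x 0)))"

lemma forms_partial0_antiderivative:
  assumes "n \<ge> 1" and "F \<in> forms n d"
  obtains G where "G \<in> forms n (Suc d)" and "has_partial0_derivative G F"
proof -
  obtain c where F: "\<And>x. F x = (\<Sum>\<alpha>\<in>monoms n d. c \<alpha> * (\<Prod>i<n. x i ^ \<alpha> i))"
    using assms(2) unfolding forms_def by blast
  define raise0 :: "(nat \<Rightarrow> nat) \<Rightarrow> nat \<Rightarrow> nat" where "raise0 \<alpha> = \<alpha>(0 := Suc (\<alpha> 0))" for \<alpha>
  define G where
    "G x = (\<Sum>\<alpha>\<in>monoms n d. c \<alpha> / of_nat (Suc (\<alpha> 0)) * (\<Prod>i<n. x i ^ raise0 \<alpha> i))" for x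
  have "inj_on raise0 (monoms n d)"
    unfolding raise0_def inj_on_def fun_eq_iff by (metis fun_upd_apply nat.inject)
  moreover have "raise0 ` monoms n d \<subseteq> monoms n (Suc d)"
    using monoms_raise0[OF assms(1)] unfolding raise0_def by blast
  ultimately have "G \<in> forms n (Suc d)"
    unfolding G_def by (rule sum_monomials_in_forms)
  moreover have "has_partial0_derivative G F"
    unfolding has_partial0_derivative_def
  proof
    fix x :: "nat \<Rightarrow> complex"
    define tail where "tail \<alpha> = (\<Prod>i\<in>{..<n}-{0}. x i ^ \<alpha> i)" for \<alpha>
    have G_line: "G (x(0 := t)) =
        (\<Sum>\<alpha>\<in>monoms n d. c \<alpha> / of_nat (Suc (\<alpha> 0)) * (t ^ Suc (\<alpha> 0) * tail \<alpha>))" for t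
      unfolding G_def raise0_def tail_def prod_monomial_upd0[OF assms(1)] ..
    have F_x: "F x = (\<Sum>\<alpha>\<in>monoms n d. c \<alpha> * (x 0 ^ \<alpha> 0 * tail \<alpha>))"
      using prod_monomial_upd0[OF assms(1), of x "x 0" \<alpha> "\<alpha> 0" for \<alpha>]
      unfolding F tail_def by simp
    have "((\<lambda>t. G (x(0 := t))) has_field_derivative
        (\<Sum>\<alpha>\<in>monoms n d.
          c \<alpha> / of_nat (Suc (\<alpha> 0)) * (of_nat (Suc (\<alpha> 0)) * x 0 ^ \<alpha> 0 * tail \<alpha>))) (at (x 0))"
      (is "(_ has_field_derivative ?D) _")
      unfolding G_line
      by (intro DERIV_sum DERIV_cmult DERIV_cmult_right) (use DERIV_power_Suc[OF DERIV_ident] in simp)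
    moreover have "?D = F x"
      unfolding F_x by (intro sum.cong refl) (simp del: of_nat_Suc)
    ultimately show "((\<lambda>t. G (x(0 := t))) has_field_derivative F x) (at (x 0))"
      by simp
  qed
  ultimately show thesis
    by (rule that)
qed

lemma linear_form_upd0_has_derivative:
  fixes a x :: "nat \<Rightarrow> 'a::real_normed_field"
  assumes "n \<ge> 1"
  shows "((\<lambda>t. \<Sum>i<n. a i * (x(0 := t)) i) has_field_derivative a 0) (at t)"
proof -
  have "(\<lambda>t. \<Sum>i<n. a i * (x(0 := t)) i) = (\<lambda>t. a 0 * t + (\<Sum>i\<in>{..<n}-{0}. a i * x i))"
    using assms by (simp add: sum.remove[of "{..<n}" 0])
  then show ?thesis
    by (auto intro!: derivative_eq_intros)
qed

lemma partial0_Waring_decomposition: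
  assumes "n \<ge> 1" and "has_partial0_derivative G F"
    and G: "\<And>x. G x = (\<Sum>k<r. c k * (\<Sum>i<n. a k i * x i) ^ Suc d)"
  shows "F x = (\<Sum>k<r. (of_nat (Suc d) * a k 0 * c k) * (\<Sum>i<n. a k i * x i) ^ d)"
proof -
  have "((\<lambda>t. G (x(0 := t))) has_field_derivative F x) (at (x 0))"
    using assms(2) unfolding has_partial0_derivative_def by blast
  moreover have "((\<lambda>t. G (x(0 := t))) has_field_derivative
      (\<Sum>k<r. c k * ((1 + of_nat d) * (a k 0 * (\<Sum>i<n. a k i * (x(0 := x 0)) i) ^ d)))) (at (x 0))"
    unfolding G
    by (intro DERIV_sum DERIV_cmult DERIV_power_Suc linear_form_upd0_has_derivative assms(1))
  ultimately show ?thesis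
    by (auto dest: DERIV_unique intro: sum.cong simp: algebra_simps)
qed

lemma WR_le_WR:
  assumes "\<And>r c a. \<forall>x. G x = (\<Sum>k<r. c k * (\<Sum>i<n. a k i * x i) ^ e) \<Longrightarrow>
      \<exists>(c :: nat \<Rightarrow> complex) a. \<forall>x. F x = (\<Sum>k<r. c k * (\<Sum>i<n. a k i * x i) ^ d)"
  shows "WR n d F \<le> WR n e G"
  unfolding WR_def
proof (rule INF_mono)
  fix r assume "r \<in> {r. \<exists>(c :: nat \<Rightarrow> complex) a. \<forall>x. G x = (\<Sum>k<r. c k * (\<Sum>i<n. a k i * x i) ^ e)}"
  then have "r \<in> {r. \<exists>(c :: nat \<Rightarrow> complex) a. \<forall>x. F x = (\<Sum>k<r. c k * (\<Sum>i<n. a k i * x i) ^ d)}"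
    using assms by blast
  then show "\<exists>r'\<in>{r. \<exists>(c :: nat \<Rightarrow> complex) a. \<forall>x. F x = (\<Sum>k<r. c k * (\<Sum>i<n. a k i * x i) ^ d)}.
      enat r' \<le> enat r"
    by blast
qed

lemma WR_le_WR_partial0:
  assumes "n \<ge> 1" and "has_partial0_derivative G F"
  shows "WR n d F \<le> WR n (Suc d) G"
proof (rule WR_le_WR)
  fix r and c :: "nat \<Rightarrow> complex" and a
  assume "\<forall>x. G x = (\<Sum>k<r. c k * (\<Sum>i<n. a k i * x i) ^ Suc d)"
  then have "F x = (\<Sum>k<r. (of_nat (Suc d) * a k 0 * c k) * (\<Sum>i<n. a k i * x i) ^ d)" for x
    by (intro partial0_Waring_decomposition[OF assms]) simp
  then show "\<exists>(c :: nat \<Rightarrow> complex) a. \<forall>x. F x = (\<Sum>k<r. c k * (\<Sum>i<n. a k i * x i) ^ d)"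
    by (intro exI[of _ "\<lambda>k. of_nat (Suc d) * a k 0 * c k"] exI[of _ a]) blast
qed

lemma maxR_le_maxR_Suc:
  assumes "n \<ge> 1"
  shows "maxR n d \<le> maxR n (Suc d)"
  unfolding maxR_def
proof (rule SUP_least)
  fix F assume "F \<in> forms n d"
  then obtain G where "G \<in> forms n (Suc d)" and "has_partial0_derivative G F"
    using forms_partial0_antiderivative[OF assms] by blast
  then show "WR n d F \<le> (SUP G \<in> forms n (Suc d). WR n (Suc d) G)"
    using WR_le_WR_partial0[OF assms] SUP_upper order_trans by metis
qed

theorem proposition12:
  fixes n d1 d2 :: nat
  assumes "n \<ge> 1" and "d1 \<le> d2"
  shows "maxR n d1 \<le> maxR n d2"
  using lift_Suc_mono_le[of "maxR n"] maxR_le_maxR_Suc[OF assms(1)] assms(2) by blast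

end
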